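(* Let $R=k[x_1,\dots,x_m]$ be a polynomial ring over a field $k$, let $I$ be a monomial ideal and $J\subseteq R$ an ideal, and let $I:\langle J\rangle=\bigcup_{r\ge0}(I:J^r)$. Let $f$ and $f'$ be the least common multiples of the minimal generating monomials of $I$ and of $I:\langle J\rangle$, respectively. Then $f'$ divides $f$. *)

theory Defs
  imports Main "HOL-Library.Poly_Mapping"
begin

text \<open>The polynomial ring k[x_1,...,x_m]: the variables are the elements of a
finite type 'n (with CARD('n) = m), exponent vectors are finitely supported maps 'n to nat,
and a polynomial is a finitely supported map from exponent vectors to k.\<close>

type_synonym ('n, 'k) mpoly = "('n \<Rightarrow>\<^sub>0 nat) \<Rightarrow>\<^sub>0 'k"

definition is_ideal :: "'a::comm_ring_1 set \<Rightarrow> bool" where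
  "is_ideal I \<longleftrightarrow> 0 \<in> I \<and> (\<forall>a\<in>I. \<forall>b\<in>I. a + b \<in> I) \<and> (\<forall>r. \<forall>a\<in>I. r * a \<in> I)"

definition ideal_gen :: "'a::comm_ring_1 set \<Rightarrow> 'a set" where
  "ideal_gen S = \<Inter> {I. is_ideal I \<and> S \<subseteq> I}"

fun ideal_pow :: "'a::comm_ring_1 set \<Rightarrow> nat \<Rightarrow> 'a set" where
  "ideal_pow J 0 = UNIV"
| "ideal_pow J (Suc r) = ideal_gen {a * b | a b. a \<in> ideal_pow J r \<and> b \<in> J}"

definition ideal_quot :: "'a::comm_ring_1 set \<Rightarrow> 'a set \<Rightarrow> 'a set" where
  "ideal_quot I K = {h. \<forall>g\<in>K. h * g \<in> I}"

definition saturation :: "'a::comm_ring_1 set \<Rightarrow> 'a set \<Rightarrow> 'a set" where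
  "saturation I J = (\<Union>r. ideal_quot I (ideal_pow J r))"

definition monom :: "('n \<Rightarrow>\<^sub>0 nat) \<Rightarrow> ('n, 'k::comm_ring_1) mpoly" where
  "monom \<alpha> = Poly_Mapping.single \<alpha> 1"

definition is_monomial :: "('n, 'k::comm_ring_1) mpoly \<Rightarrow> bool" where
  "is_monomial p \<longleftrightarrow> (\<exists>\<alpha>. p = monom \<alpha>)"

definition monomial_ideal :: "('n, 'k::comm_ring_1) mpoly set \<Rightarrow> bool" where
  "monomial_ideal I \<longleftrightarrow> is_ideal I \<and> I = ideal_gen {p \<in> I. is_monomial p}"

definition min_gen_monomials :: "('n, 'k::comm_ring_1) mpoly set \<Rightarrow> ('n, 'k) mpoly set" where
  "min_gen_monomials I = {p. is_monomial p \<and> p \<in> I \<and>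
      (\<forall>q. is_monomial q \<and> q \<in> I \<and> q dvd p \<longrightarrow> q = p)}"

definition is_lcm_of :: "'a::comm_ring_1 set \<Rightarrow> 'a \<Rightarrow> bool" where
  "is_lcm_of S f \<longleftrightarrow> (\<forall>s\<in>S. s dvd f) \<and> (\<forall>g. (\<forall>s\<in>S. s dvd g) \<longrightarrow> f dvd g)"

end

theory Submission
  imports Defs
begin

text \<open>Membership in a monomial ideal \<open>I\<close> is decided term by term: a term \<open>x\<^sup>s\<close> of a polynomial
  must be divisible by a minimal generator of \<open>I\<close>. If every minimal generator has
  \<open>x\<^sub>j\<close>-exponent at most \<open>a\<^sub>j\<close>, then \<open>x\<^sub>j x\<^sup>a h \<in> I\<close> already forces \<open>x\<^sup>a h \<in> I\<close>, for every
  polynomial \<open>h\<close>. So if a monomial \<open>x\<^sup>b\<close> of \<open>I : J\<^sup>r\<close> had an exponent \<open>b\<^sub>j\<close> exceeding that of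
  the lcm \<open>f\<close>, then \<open>x\<^sup>b / x\<^sub>j\<close> would lie in \<open>I : J\<^sup>r\<close> as well, and \<open>x\<^sup>b\<close> would not be a minimal
  generator of the saturation. Hence all those generators divide \<open>f\<close>, and so does their lcm.\<close>

definition exp_le :: "('n \<Rightarrow>\<^sub>0 nat) \<Rightarrow> ('n \<Rightarrow>\<^sub>0 nat) \<Rightarrow> bool" where
  "exp_le c s \<longleftrightarrow> (\<forall>i. Poly_Mapping.lookup c i \<le> Poly_Mapping.lookup s i)"

lemma exp_le_refl: "exp_le s s"
  by (simp add: exp_le_def)

lemma exp_le_trans: "exp_le a b \<Longrightarrow> exp_le b c \<Longrightarrow> exp_le a c"
  unfolding exp_le_def using le_trans by blast

lemma exp_le_add_left: "exp_le c v \<Longrightarrow> exp_le c (u + v)"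
  by (simp add: exp_le_def lookup_add add_increasing)

lemma add_diff_cancel_exp_le: "exp_le c s \<Longrightarrow> c + (s - c) = s"
  by (rule poly_mapping_eqI) (simp add: exp_le_def lookup_add lookup_minus)

lemma poly_mapping_sum_single:
  fixes g :: "'a \<Rightarrow>\<^sub>0 'b::comm_monoid_add"
  shows "(\<Sum>s\<in>Poly_Mapping.keys g. Poly_Mapping.single s (Poly_Mapping.lookup g s)) = g"
  by (rule poly_mapping_eqI) (simp add: lookup_sum lookup_single when_def sum.delta' in_keys_iff)

lemma monom_mult:
  fixes g :: "('n, 'k::comm_ring_1) mpoly"
  shows "monom c * g = (\<Sum>s\<in>Poly_Mapping.keys g. Poly_Mapping.single (c + s) (Poly_Mapping.lookup g s))"
proof -
  have "monom c * g = monom c * (\<Sum>s\<in>Poly_Mapping.keys g. Poly_Mapping.single s (Poly_Mapping.lookup g s))"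
    by (simp only: poly_mapping_sum_single)
  then show ?thesis
    by (simp add: sum_distrib_left monom_def mult_single)
qed

lemma lookup_monom_mult:
  fixes g :: "('n, 'k::comm_ring_1) mpoly"
  shows "Poly_Mapping.lookup (monom c * g) (c + t) = Poly_Mapping.lookup g t"
  by (simp add: monom_mult lookup_sum lookup_single when_def sum.delta' in_keys_iff)

lemma keys_monom_mult:
  fixes g :: "('n, 'k::comm_ring_1) mpoly"
  shows "Poly_Mapping.keys (monom c * g) = (\<lambda>t. c + t) ` Poly_Mapping.keys g"
proof
  show "Poly_Mapping.keys (monom c * g) \<subseteq> (\<lambda>t. c + t) ` Poly_Mapping.keys g"
    using keys_mult[of "monom c" g] by (auto simp: monom_def)
  show "(\<lambda>t. c + t) ` Poly_Mapping.keys g \<subseteq> Poly_Mapping.keys (monom c * g)"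
    by (auto simp: in_keys_iff lookup_monom_mult)
qed

lemma is_monomial_monom [simp]: "is_monomial (monom a)"
  by (auto simp: is_monomial_def)

lemma monom_add: "(monom (a + b) :: ('n, 'k::comm_ring_1) mpoly) = monom a * monom b"
  by (simp add: monom_def mult_single)

lemma monom_dvd_iff:
  fixes g :: "('n, 'k::comm_ring_1) mpoly"
  shows "monom c dvd g \<longleftrightarrow> (\<forall>s\<in>Poly_Mapping.keys g. exp_le c s)"
proof
  assume "monom c dvd g"
  then obtain h where "g = monom c * h" by (auto simp: dvd_def)
  then show "\<forall>s\<in>Poly_Mapping.keys g. exp_le c s"
    by (auto simp: keys_monom_mult exp_le_def lookup_add)
next
  assume le: "\<forall>s\<in>Poly_Mapping.keys g. exp_le c s"
  have "monom c * (\<Sum>s\<in>Poly_Mapping.keys g. Poly_Mapping.single (s - c) (Poly_Mapping.lookup g s))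
     = (\<Sum>s\<in>Poly_Mapping.keys g. Poly_Mapping.single (c + (s - c)) (Poly_Mapping.lookup g s))"
    by (simp add: sum_distrib_left monom_def mult_single)
  also have "\<dots> = g"
    using le by (simp add: add_diff_cancel_exp_le poly_mapping_sum_single cong: sum.cong)
  finally show "monom c dvd g" by (metis dvdI)
qed

lemma monom_dvd_monom_iff:
  "(monom c :: ('n, 'k::comm_ring_1) mpoly) dvd monom d \<longleftrightarrow> exp_le c d"
  using monom_dvd_iff[of c "monom d"] by (simp add: monom_def)

lemma is_ideal_sum:
  assumes "is_ideal I" "\<And>x. x \<in> A \<Longrightarrow> f x \<in> I"
  shows "sum f A \<in> I"
  using assms(2)
  by (induction A rule: infinite_finite_induct) (use assms(1) in \<open>auto simp: is_ideal_def\<close>)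

lemma ideal_gen_least: "is_ideal T \<Longrightarrow> S \<subseteq> T \<Longrightarrow> ideal_gen S \<subseteq> T"
  unfolding ideal_gen_def by blast

lemma ideal_monom_exp_le:
  fixes I :: "('n, 'k::comm_ring_1) mpoly set"
  assumes "is_ideal I" "monom c \<in> I" "exp_le c d"
  shows "monom d \<in> I"
proof -
  have "monom (d - c) * monom c \<in> I"
    using assms(1,2) unfolding is_ideal_def by blast
  then show ?thesis
    by (simp add: monom_add[symmetric] add.commute add_diff_cancel_exp_le[OF assms(3)])
qed

lemma ideal_mem_if_monoms_of_keys:
  fixes I :: "('n, 'k::comm_ring_1) mpoly set"
  assumes "is_ideal I" "\<forall>s\<in>Poly_Mapping.keys p. monom s \<in> I"
  shows "p \<in> I"
proof -
  have "p = (\<Sum>s\<in>Poly_Mapping.keys p. Poly_Mapping.single 0 (Poly_Mapping.lookup p s) * monom s)"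
    using poly_mapping_sum_single[of p] by (simp add: monom_def mult_single)
  also have "\<dots> \<in> I"
    using assms by (intro is_ideal_sum) (auto simp: is_ideal_def)
  finally show ?thesis .
qed

text \<open>The polynomials all of whose terms are divisible by a monomial of \<open>I\<close> form an ideal
  containing the monomials of \<open>I\<close>, hence containing \<open>I\<close>.\<close>
lemma monomial_ideal_keys_divisible:
  fixes I :: "('n, 'k::comm_ring_1) mpoly set"
  assumes "monomial_ideal I" "p \<in> I" "s \<in> Poly_Mapping.keys p"
  shows "\<exists>c. monom c \<in> I \<and> exp_le c s"
proof -
  define T where "T = {p :: ('n, 'k) mpoly. \<forall>s\<in>Poly_Mapping.keys p. \<exists>c. monom c \<in> I \<and> exp_le c s}"
  have "is_ideal T"
    unfolding is_ideal_def
  proof (intro conjI ballI allI)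
    show "0 \<in> T" by (simp add: T_def)
  next
    fix a b assume "a \<in> T" "b \<in> T"
    then show "a + b \<in> T" using keys_add[of a b] unfolding T_def by blast
  next
    fix r a assume "a \<in> T"
    show "r * a \<in> T" unfolding T_def mem_Collect_eq
    proof
      fix s assume "s \<in> Poly_Mapping.keys (r * a)"
      then obtain u v where "s = u + v" "v \<in> Poly_Mapping.keys a"
        using keys_mult[of r a] by blast
      with \<open>a \<in> T\<close> show "\<exists>c. monom c \<in> I \<and> exp_le c s"
        unfolding T_def using exp_le_add_left by blast
    qed
  qed
  moreover have "{p \<in> I. is_monomial p} \<subseteq> T"
    by (auto simp: T_def is_monomial_def monom_def exp_le_def)
  ultimately have "I \<subseteq> T"
    using assms(1) ideal_gen_least unfolding monomial_ideal_def by blast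
  then show ?thesis using assms(2,3) by (auto simp: T_def)
qed

lemma exp_le_total_degree_less:
  assumes "exp_le d u" "d \<noteq> u"
  shows "sum (Poly_Mapping.lookup d) (Poly_Mapping.keys d) < sum (Poly_Mapping.lookup u) (Poly_Mapping.keys u)"
proof -
  have le: "Poly_Mapping.lookup d i \<le> Poly_Mapping.lookup u i" for i
    using assms(1) by (simp add: exp_le_def)
  obtain i where "Poly_Mapping.lookup d i \<noteq> Poly_Mapping.lookup u i"
    using assms(2) poly_mapping_eqI by metis
  with le have i: "Poly_Mapping.lookup d i < Poly_Mapping.lookup u i"
    using le_neq_implies_less by blast
  have keys: "Poly_Mapping.keys d \<subseteq> Poly_Mapping.keys u"
  proof
    fix k assume "k \<in> Poly_Mapping.keys d"
    with le[of k] show "k \<in> Poly_Mapping.keys u"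
      unfolding in_keys_iff by linarith
  qed
  have "sum (Poly_Mapping.lookup d) (Poly_Mapping.keys d) = sum (Poly_Mapping.lookup d) (Poly_Mapping.keys u)"
    using keys by (intro sum.mono_neutral_left) (auto simp: in_keys_iff)
  also have "\<dots> < sum (Poly_Mapping.lookup u) (Poly_Mapping.keys u)"
  proof (rule sum_strict_mono_ex1)
    show "\<exists>a\<in>Poly_Mapping.keys u. Poly_Mapping.lookup d a < Poly_Mapping.lookup u a"
      using i by (intro bexI[of _ i]) (auto simp: in_keys_iff)
  qed (simp_all add: le)
  finally show ?thesis .
qed

lemma min_gen_monomial_exp_le:
  fixes I :: "('n, 'k::comm_ring_1) mpoly set"
  shows "monom u \<in> I \<Longrightarrow> \<exists>c. monom c \<in> min_gen_monomials I \<and> exp_le c u"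
proof (induction u rule: measure_induct_rule[where f = "\<lambda>u. sum (Poly_Mapping.lookup u) (Poly_Mapping.keys u)"])
  case (less u)
  show ?case
  proof (cases "monom u \<in> min_gen_monomials I")
    case True
    then show ?thesis using exp_le_refl by blast
  next
    case False
    then obtain q where q: "is_monomial q" "q \<in> I" "q dvd monom u" "q \<noteq> monom u"
      using less.prems by (auto simp: min_gen_monomials_def)
    then obtain d where d: "q = monom d"
      by (auto simp: is_monomial_def)
    have "exp_le d u" "d \<noteq> u"
      using q(3,4) by (auto simp: d monom_dvd_monom_iff)
    then obtain c where "monom c \<in> min_gen_monomials I" "exp_le c d"
      using less.IH exp_le_total_degree_less q(2) d by metis
    then show ?thesis
      using \<open>exp_le d u\<close> exp_le_trans by blast
  qed
qed

lemma monomial_ideal_mem_iff: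
  fixes I :: "('n, 'k::comm_ring_1) mpoly set"
  assumes "monomial_ideal I"
  shows "p \<in> I \<longleftrightarrow> (\<forall>s\<in>Poly_Mapping.keys p. \<exists>c. monom c \<in> min_gen_monomials I \<and> exp_le c s)"
proof
  assume "p \<in> I"
  show "\<forall>s\<in>Poly_Mapping.keys p. \<exists>c. monom c \<in> min_gen_monomials I \<and> exp_le c s"
  proof
    fix s assume "s \<in> Poly_Mapping.keys p"
    then obtain d where "monom d \<in> I" "exp_le d s"
      using monomial_ideal_keys_divisible[OF assms \<open>p \<in> I\<close>] by blast
    then show "\<exists>c. monom c \<in> min_gen_monomials I \<and> exp_le c s"
      using min_gen_monomial_exp_le exp_le_trans by blast
  qed
next
  assume gens: "\<forall>s\<in>Poly_Mapping.keys p. \<exists>c. monom c \<in> min_gen_monomials I \<and> exp_le c s"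
  have "is_ideal I"
    using assms by (simp add: monomial_ideal_def)
  moreover have "\<forall>s\<in>Poly_Mapping.keys p. monom s \<in> I"
    using gens ideal_monom_exp_le[OF \<open>is_ideal I\<close>] by (auto simp: min_gen_monomials_def)
  ultimately show "p \<in> I"
    by (rule ideal_mem_if_monoms_of_keys)
qed

lemma monomial_ideal_cancel_var:
  fixes I :: "('n, 'k::comm_ring_1) mpoly set"
  assumes "monomial_ideal I"
    and "\<And>c s. monom c \<in> min_gen_monomials I \<Longrightarrow> s \<in> Poly_Mapping.keys q \<Longrightarrow>
           Poly_Mapping.lookup c j \<le> Poly_Mapping.lookup s j"
    and "monom (Poly_Mapping.single j 1) * q \<in> I"
  shows "q \<in> I"
proof -
  have "\<exists>c. monom c \<in> min_gen_monomials I \<and> exp_le c s" if s: "s \<in> Poly_Mapping.keys q" for s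
  proof -
    have "Poly_Mapping.single j 1 + s \<in> Poly_Mapping.keys (monom (Poly_Mapping.single j 1) * q)"
      using s by (simp add: keys_monom_mult)
    then obtain c where c: "monom c \<in> min_gen_monomials I" "exp_le c (Poly_Mapping.single j 1 + s)"
      using assms(3) monomial_ideal_mem_iff[OF assms(1)] by blast
    have "Poly_Mapping.lookup c i \<le> Poly_Mapping.lookup s i" for i
    proof (cases "i = j")
      case True
      then show ?thesis using assms(2)[OF c(1) s] by simp
    next
      case False
      then show ?thesis
        using c(2)[unfolded exp_le_def, rule_format, of i] by (simp add: lookup_add lookup_single)
    qed
    with c(1) show ?thesis
      unfolding exp_le_def by blast
  qed
  then show ?thesis
    using monomial_ideal_mem_iff[OF assms(1)] by blast
qed

lemma ideal_quot_cancel_var: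
  fixes I :: "('n, 'k::comm_ring_1) mpoly set"
  assumes "monomial_ideal I"
    and "\<And>c. monom c \<in> min_gen_monomials I \<Longrightarrow> Poly_Mapping.lookup c j \<le> Poly_Mapping.lookup a j"
    and "monom (Poly_Mapping.single j 1 + a) \<in> ideal_quot I K"
  shows "monom a \<in> ideal_quot I K"
proof (unfold ideal_quot_def, intro CollectI ballI)
  fix g assume "g \<in> K"
  show "monom a * g \<in> I"
  proof (rule monomial_ideal_cancel_var[OF assms(1)])
    show "monom (Poly_Mapping.single j 1) * (monom a * g) \<in> I"
      using assms(3) \<open>g \<in> K\<close> by (simp add: ideal_quot_def monom_add mult.assoc)
    show "Poly_Mapping.lookup c j \<le> Poly_Mapping.lookup s j"
      if "monom c \<in> min_gen_monomials I" "s \<in> Poly_Mapping.keys (monom a * g)" for c s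
      using that assms(2)[of c] by (auto simp: keys_monom_mult lookup_add)
  qed
qed

lemma min_gen_saturation_exp_le:
  fixes I J :: "('n, 'k::comm_ring_1) mpoly set"
  assumes "monomial_ideal I"
    and "\<And>c. monom c \<in> min_gen_monomials I \<Longrightarrow> exp_le c s"
    and "monom b \<in> min_gen_monomials (saturation I J)"
  shows "exp_le b s"
proof (rule ccontr)
  assume "\<not> exp_le b s"
  then obtain j where j: "Poly_Mapping.lookup s j < Poly_Mapping.lookup b j"
    by (auto simp: exp_le_def not_le)
  define a where "a = b - Poly_Mapping.single j 1"
  have a_j: "Poly_Mapping.lookup a j = Poly_Mapping.lookup b j - 1"
    by (simp add: a_def lookup_minus)
  have b: "b = Poly_Mapping.single j 1 + a"
    by (rule poly_mapping_eqI) (use j in \<open>auto simp: a_def lookup_add lookup_minus lookup_single when_def\<close>)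
  have bound: "Poly_Mapping.lookup c j \<le> Poly_Mapping.lookup a j" if "monom c \<in> min_gen_monomials I" for c
  proof -
    have "Poly_Mapping.lookup c j \<le> Poly_Mapping.lookup s j"
      using assms(2)[OF that] by (simp add: exp_le_def)
    with j a_j show ?thesis by linarith
  qed
  obtain r where "monom b \<in> ideal_quot I (ideal_pow J r)"
    using assms(3) by (auto simp: min_gen_monomials_def saturation_def)
  then have "monom a \<in> ideal_quot I (ideal_pow J r)"
    using ideal_quot_cancel_var[OF assms(1) bound] by (simp add: b)
  then have sat: "monom a \<in> saturation I J"
    by (auto simp: saturation_def)
  have minimal: "\<And>q. is_monomial q \<Longrightarrow> q \<in> saturation I J \<Longrightarrow> q dvd monom b \<Longrightarrow> q = monom b"
    using assms(3) by (simp add: min_gen_monomials_def)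
  have "(monom a :: ('n, 'k) mpoly) = monom b"
    using minimal[OF is_monomial_monom sat] by (simp add: b monom_add)
  then have "Poly_Mapping.lookup b j \<le> Poly_Mapping.lookup a j"
    using monom_dvd_monom_iff[of b a, where ?'k = 'k] by (simp add: exp_le_def)
  with j a_j show False by linarith
qed

theorem lemma2p8:
  fixes I J :: "('n::finite, 'k::field) mpoly set"
    and f f' :: "('n, 'k) mpoly"
  assumes "monomial_ideal I"
    and "is_ideal J"
    and "is_lcm_of (min_gen_monomials I) f"
    and "is_lcm_of (min_gen_monomials (saturation I J)) f'"
  shows "f' dvd f"
proof -
  have gens_I: "exp_le c s" if "monom c \<in> min_gen_monomials I" "s \<in> Poly_Mapping.keys f" for c s
    using assms(3) that by (auto simp: is_lcm_of_def monom_dvd_iff)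
  have "x dvd f" if x: "x \<in> min_gen_monomials (saturation I J)" for x
  proof -
    obtain b where "x = monom b"
      using x by (auto simp: min_gen_monomials_def is_monomial_def)
    with x gens_I show ?thesis
      using min_gen_saturation_exp_le[OF assms(1)] by (auto simp: monom_dvd_iff)
  qed
  then show ?thesis
    using assms(4) by (simp add: is_lcm_of_def)
qed

end
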